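(* Let $\mathbf{x}$ be a parking function of length $n$, run Algorithm A on $\mathbf{x}$, and let $1\le i<j\le n$. Then $|s_i(\mathbf{x})|>|s_j(\mathbf{x})|$ if and only if $P(\mathbf{x})$ contains the up edge $i\rightarrow j$.
   Context: A parking function of length $n$ is a sequence of positive integers which, sorted increasingly as $x_{(1)}\le\dots\le x_{(n)}$, satisfies $x_{(k)}\le k$ for all $k$. Algorithm A: Input a parking function $\mathbf{x}\in\mathbb{Z}_{>0}^n$; start with the vertex set $[n]$ and no edges, and set $\mathbf{y}:=\mathbf{x}-(1,\dots,1)$. Repeat the following. (Up step) If some $y_k=0$: let $j:=\max\{k: y_k=0\}$ (the up feeder); for every $k>j$ with $y_k>0$, introduce the directed (up) edge $j\rightarrow k$ and replace $y_k$ by $y_k-1$; replace every entry that was negative at the start of this step by that entry minus $1$; set $y_j:=-1$; repeat. (Down step) Else, if some $y_k>0$: among all indices $j$ such that there is $k<j$ with $y_k>0$ and the edge $k\leftarrow j$ not yet introduced (down feeder candidates), choose $j$ with minimal $y_j$ (the down feeder); for every $k<j$ with $y_k>0$, introduce the directed (down) edge $k\leftarrow j$ (directed from $j$ to $k$) and replace $y_k$ by $y_k-1$; repeat. (Stop) Else (all $y_k<0$): join every pair of vertices not yet joined by an undirected (downish) edge and stop. Output: the mixed graph $P(\mathbf{x})$ and the source priority vector $s(\mathbf{x}):=(y_1,\dots,y_n)$ (final values). *)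

theory Defs
  imports Main
begin

text \<open>Parking functions of length n are lists xs with length n; the entry
  x_i (1-based) is xs ! (i - 1).\<close>
definition parking_function :: "nat list \<Rightarrow> bool" where
  "parking_function xs \<longleftrightarrow>
     (\<forall>v \<in> set xs. 0 < v) \<and> (\<forall>k < length xs. sort xs ! k \<le> k + 1)"

text \<open>State of Algorithm A on vertex set {1..n}: the vector y (indices 1..n),
  the set U of up edges (j,k) meaning j \<rightarrow> k, and the set D of down
  edges (j,k) meaning the edge k \<leftarrow> j directed from j to k.\<close>
type_synonym algA_state = "(nat \<Rightarrow> int) \<times> (nat \<times> nat) set \<times> (nat \<times> nat) set"

definition algA_init :: "nat list \<Rightarrow> algA_state" where
  "algA_init xs =
     ((\<lambda>k. if k \<in> {1..length xs} then int (xs ! (k - 1)) - 1 else 0), {}, {})"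

definition up_step :: "nat \<Rightarrow> algA_state \<Rightarrow> algA_state \<Rightarrow> bool" where
  "up_step n st st' \<longleftrightarrow>
     (case st of (y, U, D) \<Rightarrow>
       (\<exists>j \<in> {1..n}. y j = 0 \<and> (\<forall>k \<in> {1..n}. y k = 0 \<longrightarrow> k \<le> j) \<and>
          st' = ((\<lambda>k. if k \<notin> {1..n} then y k
                      else if k = j then -1
                      else if j < k \<and> 0 < y k then y k - 1
                      else if y k < 0 then y k - 1
                      else y k),
                 U \<union> {(j, k) | k. k \<in> {1..n} \<and> j < k \<and> 0 < y k},
                 D)))"

definition down_cand :: "nat \<Rightarrow> algA_state \<Rightarrow> nat \<Rightarrow> bool" where
  "down_cand n st j \<longleftrightarrow>
     (case st of (y, U, D) \<Rightarrow>
        j \<in> {1..n} \<and> (\<exists>k \<in> {1..n}. k < j \<and> 0 < y k \<and> (j, k) \<notin> D))"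

definition down_step :: "nat \<Rightarrow> algA_state \<Rightarrow> algA_state \<Rightarrow> bool" where
  "down_step n st st' \<longleftrightarrow>
     (case st of (y, U, D) \<Rightarrow>
       (\<forall>k \<in> {1..n}. y k \<noteq> 0) \<and> (\<exists>k \<in> {1..n}. 0 < y k) \<and>
       (\<exists>j. down_cand n st j \<and> (\<forall>j'. down_cand n st j' \<longrightarrow> y j \<le> y j') \<and>
          st' = ((\<lambda>k. if k \<in> {1..n} \<and> k < j \<and> 0 < y k then y k - 1 else y k),
                 U,
                 D \<union> {(j, k) | k. k \<in> {1..n} \<and> k < j \<and> 0 < y k})))"

text \<open>One step of Algorithm A (the choice of down feeder among ties is left
  nondeterministic).\<close>
definition algA_step :: "nat \<Rightarrow> algA_state \<Rightarrow> algA_state \<Rightarrow> bool" where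
  "algA_step n st st' \<longleftrightarrow> up_step n st st' \<or> down_step n st st'"

definition algA_stopped :: "nat \<Rightarrow> algA_state \<Rightarrow> bool" where
  "algA_stopped n st \<longleftrightarrow> (case st of (y, U, D) \<Rightarrow> (\<forall>k \<in> {1..n}. y k < 0))"

text \<open>Output of a complete run of Algorithm A on xs: source priority vector s,
  up edges U, down edges D, and the undirected (downish) edges W added at the stop.\<close>
definition algA_output ::
  "nat list \<Rightarrow> (nat \<Rightarrow> int) \<Rightarrow> (nat \<times> nat) set \<Rightarrow> (nat \<times> nat) set \<Rightarrow> nat set set \<Rightarrow> bool" where
  "algA_output xs s U D W \<longleftrightarrow>
     (algA_step (length xs))\<^sup>*\<^sup>* (algA_init xs) (s, U, D) \<and>
     algA_stopped (length xs) (s, U, D) \<and>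
     W = {{a, b} | a b. a \<in> {1..length xs} \<and> b \<in> {1..length xs} \<and> a \<noteq> b \<and>
            (a, b) \<notin> U \<union> D \<and> (b, a) \<notin> U \<union> D}"

end

theory Submission
  imports Defs
begin

(* Along every run, for i < j: if i -> j is an up
       edge then y i < 0 and y i lies below y j (or y j is still nonnegative);
       if there is no up edge i -> j but y i < 0, then y j is negative and below
       y i.  At the stop all entries are negative, which turns the invariant
       into the claimed equivalence.  This part only needs positive entries.
   (2) Termination.  Every step lowers the sum of (y k + 1) over the
       nonnegative entries.
   (3) Progress.  A budget invariant bounds each nonnegative y k by x_k - 1
       minus the number of earlier feeders and of down edges into k.  If no
       down feeder candidate existed, every positive vertex would have received
       all possible down edges; the budget then forces large entries of x on
       the positive vertices, contradicting the parking condition.  Hence a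
       non-stopped state always has a successor, and a terminating run exists. *)

definition up_update :: "nat \<Rightarrow> (nat \<Rightarrow> int) \<Rightarrow> nat \<Rightarrow> nat \<Rightarrow> int" where
  "up_update n y j = (\<lambda>k. if k \<notin> {1..n} then y k
                          else if k = j then -1
                          else if j < k \<and> 0 < y k then y k - 1
                          else if y k < 0 then y k - 1
                          else y k)"

definition up_edges :: "nat \<Rightarrow> (nat \<Rightarrow> int) \<Rightarrow> nat \<Rightarrow> (nat \<times> nat) set" where
  "up_edges n y j = {(j, k) | k. k \<in> {1..n} \<and> j < k \<and> 0 < y k}"

definition down_update :: "nat \<Rightarrow> (nat \<Rightarrow> int) \<Rightarrow> nat \<Rightarrow> nat \<Rightarrow> int" where
  "down_update n y j = (\<lambda>k. if k \<in> {1..n} \<and> k < j \<and> 0 < y k then y k - 1 else y k)"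

definition down_edges :: "nat \<Rightarrow> (nat \<Rightarrow> int) \<Rightarrow> nat \<Rightarrow> (nat \<times> nat) set" where
  "down_edges n y j = {(j, k) | k. k \<in> {1..n} \<and> k < j \<and> 0 < y k}"

definition up_feeder :: "nat \<Rightarrow> (nat \<Rightarrow> int) \<Rightarrow> nat \<Rightarrow> bool" where
  "up_feeder n y j \<longleftrightarrow> j \<in> {1..n} \<and> y j = 0 \<and> (\<forall>k \<in> {1..n}. y k = 0 \<longrightarrow> k \<le> j)"

lemma up_step_iff:
  "up_step n (y, U, D) st' \<longleftrightarrow>
     (\<exists>j. up_feeder n y j \<and> st' = (up_update n y j, U \<union> up_edges n y j, D))"
  unfolding up_step_def up_feeder_def up_update_def up_edges_def by auto

lemma down_step_iff:
  "down_step n (y, U, D) st' \<longleftrightarrow>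
     (\<forall>k \<in> {1..n}. y k \<noteq> 0) \<and> (\<exists>k \<in> {1..n}. 0 < y k) \<and>
     (\<exists>j. down_cand n (y, U, D) j \<and> (\<forall>j'. down_cand n (y, U, D) j' \<longrightarrow> y j \<le> y j') \<and>
          st' = (down_update n y j, U, D \<union> down_edges n y j))"
  unfolding down_step_def down_update_def down_edges_def by simp

lemma up_update_neg_iff:
  assumes "up_feeder n y j" and "k \<in> {1..n}"
  shows "up_update n y j k < 0 \<longleftrightarrow> k = j \<or> y k < 0"
  using assms unfolding up_feeder_def up_update_def by auto

subsection \<open>The edge/priority invariant\<close>

definition up_edge_order :: "nat \<Rightarrow> algA_state \<Rightarrow> bool" where
  "up_edge_order n st \<longleftrightarrow> (case st of (y, U, D) \<Rightarrow>
     (\<forall>i j. 1 \<le> i \<longrightarrow> i < j \<longrightarrow> j \<le> n \<longrightarrow>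
        ((i, j) \<in> U \<longrightarrow> y i < 0 \<and> (0 \<le> y j \<or> y i < y j)) \<and>
        ((i, j) \<notin> U \<and> y i < 0 \<longrightarrow> y j < 0 \<and> y j < y i)))"

lemma up_edge_orderD:
  assumes "up_edge_order n (y, U, D)" and "1 \<le> i" "i < j" "j \<le> n"
  shows "(i, j) \<in> U \<Longrightarrow> y i < 0 \<and> (0 \<le> y j \<or> y i < y j)"
    and "(i, j) \<notin> U \<Longrightarrow> y i < 0 \<Longrightarrow> y j < 0 \<and> y j < y i"
  using assms unfolding up_edge_order_def by auto

text \<open>An up step adds edges j0 -> k only towards positive k, whose entries stay
  nonnegative, while j0 becomes -1; negative entries all move down together.\<close>

lemma up_edge_order_up_step:
  assumes inv: "up_edge_order n (y, U, D)" and feeder: "up_feeder n y j0"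
  shows "up_edge_order n (up_update n y j0, U \<union> up_edges n y j0, D)"
  unfolding up_edge_order_def prod.case
proof (intro allI impI conjI)
  fix i j assume ij: "1 \<le> i" "i < j" "j \<le> n"
  note old_up = up_edge_orderD(1)[OF inv ij] and old_no = up_edge_orderD(2)[OF inv ij]
  have j0: "j0 \<in> {1..n}" "y j0 = 0" and later_nonzero: "j0 < j \<Longrightarrow> y j \<noteq> 0"
    using feeder ij unfolding up_feeder_def by fastforce+
  { assume "(i, j) \<in> U \<union> up_edges n y j0"
    then show "up_update n y j0 i < 0"
      "0 \<le> up_update n y j0 j \<or> up_update n y j0 i < up_update n y j0 j"
      using old_up ij j0 unfolding up_update_def up_edges_def by auto }
  { assume "(i, j) \<notin> U \<union> up_edges n y j0 \<and> up_update n y j0 i < 0"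
    then show "up_update n y j0 j < 0" "up_update n y j0 j < up_update n y j0 i"
      using old_no ij j0 later_nonzero unfolding up_update_def up_edges_def
      by (auto split: if_splits) }
qed

text \<open>A down step only lowers positive entries, which the invariant never
  compares with a negative entry from below.\<close>

lemma up_edge_order_down_step:
  assumes inv: "up_edge_order n (y, U, D)"
  shows "up_edge_order n (down_update n y j0, U, D')"
  unfolding up_edge_order_def prod.case
proof (intro allI impI)
  fix i j assume ij: "1 \<le> i" "i < j" "j \<le> n"
  show "((i, j) \<in> U \<longrightarrow> down_update n y j0 i < 0 \<and>
        (0 \<le> down_update n y j0 j \<or> down_update n y j0 i < down_update n y j0 j)) \<and>
      ((i, j) \<notin> U \<and> down_update n y j0 i < 0 \<longrightarrow>
        down_update n y j0 j < 0 \<and> down_update n y j0 j < down_update n y j0 i)"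
    using up_edge_orderD[OF inv ij] unfolding down_update_def by auto
qed

lemma up_edge_order_step:
  assumes "up_edge_order n st" and "algA_step n st st'"
  shows "up_edge_order n st'"
proof -
  obtain y U D where st: "st = (y, U, D)" by (cases st)
  show ?thesis
    using assms up_edge_order_up_step up_edge_order_down_step
    unfolding st algA_step_def up_step_iff down_step_iff by blast
qed

lemma up_edge_order_init:
  assumes "\<forall>v \<in> set xs. 0 < v"
  shows "up_edge_order n (algA_init xs)"
  using assms unfolding up_edge_order_def algA_init_def by (auto simp: nth_mem)

lemma up_edge_order_reachable:
  assumes "\<forall>v \<in> set xs. 0 < v" and "(algA_step n)\<^sup>*\<^sup>* (algA_init xs) st"
  shows "up_edge_order n st"
  using assms(2)
  by (induction rule: rtranclp_induct)
     (auto intro: up_edge_order_init[OF assms(1)] up_edge_order_step)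

text \<open>At the stop all entries are negative, so the invariant says precisely
  that up edges i -> j are the pairs with |y i| > |y j|.\<close>

lemma up_edge_order_stopped:
  assumes "up_edge_order n (s, U, D)" and "algA_stopped n (s, U, D)"
    and "1 \<le> i" "i < j" "j \<le> n"
  shows "\<bar>s i\<bar> > \<bar>s j\<bar> \<longleftrightarrow> (i, j) \<in> U"
proof -
  have "s i < 0" "s j < 0"
    using assms(2-) unfolding algA_stopped_def by auto
  moreover have "(i, j) \<in> U \<Longrightarrow> s i < s j" and "(i, j) \<notin> U \<Longrightarrow> s j < s i"
    using up_edge_orderD[OF assms(1,3-)] \<open>s i < 0\<close> \<open>s j < 0\<close> by auto
  ultimately show ?thesis by (cases "(i, j) \<in> U") auto
qed

subsection \<open>Termination\<close>

text \<open>The potential: the total amount by which nonnegative entries still have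
  to be lowered before they become negative.\<close>

definition potential :: "nat \<Rightarrow> (nat \<Rightarrow> int) \<Rightarrow> nat" where
  "potential n y = (\<Sum>k\<in>{1..n}. if 0 \<le> y k then nat (y k + 1) else 0)"

lemma potential_decreases:
  assumes "\<forall>k \<in> {1..n}. y' k \<le> y k" and "k0 \<in> {1..n}" "0 \<le> y k0" "y' k0 < y k0"
  shows "potential n y' < potential n y"
  unfolding potential_def
proof (rule sum_strict_mono_ex1)
  show "\<forall>k\<in>{1..n}. (if 0 \<le> y' k then nat (y' k + 1) else 0)
                     \<le> (if 0 \<le> y k then nat (y k + 1) else 0)"
    using assms(1) by auto
  show "\<exists>k\<in>{1..n}. (if 0 \<le> y' k then nat (y' k + 1) else 0)
                     < (if 0 \<le> y k then nat (y k + 1) else 0)"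
    using assms(2-) by (intro bexI[of _ k0]) auto
qed simp

text \<open>An up step lowers the feeder from 0 to -1; a down step lowers at least one
  positive entry.\<close>

lemma potential_step:
  assumes "algA_step n (y, U, D) (y', U', D')"
  shows "potential n y' < potential n y"
  using assms unfolding algA_step_def
proof
  assume "up_step n (y, U, D) (y', U', D')"
  then obtain j where j: "up_feeder n y j" and y': "y' = up_update n y j"
    unfolding up_step_iff by blast
  show ?thesis unfolding y'
    by (rule potential_decreases[of _ _ _ j])
       (use j in \<open>auto simp: up_update_def up_feeder_def\<close>)
next
  assume "down_step n (y, U, D) (y', U', D')"
  then obtain j where j: "down_cand n (y, U, D) j" and y': "y' = down_update n y j"
    unfolding down_step_iff by blast
  then obtain k where "k \<in> {1..n}" "k < j" "0 < y k"
    unfolding down_cand_def by auto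
  then show ?thesis unfolding y'
    by (intro potential_decreases[of _ _ _ k]) (auto simp: down_update_def)
qed

subsection \<open>The budget invariant\<close>

text \<open>A nonnegative entry y k has been lowered at least once for every earlier
  negative vertex and once for every down edge into k; its initial value was
  x_k - 1.\<close>

definition budget_inv :: "nat \<Rightarrow> nat list \<Rightarrow> algA_state \<Rightarrow> bool" where
  "budget_inv n xs st \<longleftrightarrow> (case st of (y, U, D) \<Rightarrow> \<forall>k\<in>{1..n}. 0 \<le> y k \<longrightarrow>
     y k + int (card {j\<in>{1..n}. j < k \<and> y j < 0}) + int (card {j\<in>{k<..n}. (j, k) \<in> D})
       \<le> int (xs ! (k - 1)) - 1)"

lemma budget_inv_init:
  assumes "\<forall>v \<in> set xs. 0 < v" and n: "n = length xs"
  shows "budget_inv n xs (algA_init xs)"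
proof -
  define y where "y = fst (algA_init xs)"
  have y: "j \<in> {1..n} \<Longrightarrow> y j = int (xs ! (j - 1)) - 1" for j
    using n unfolding y_def algA_init_def by simp
  have "0 < xs ! (j - 1)" if "j \<in> {1..n}" for j
    using assms(1) nth_mem[of "j - 1" xs] that n by auto
  then have "{j\<in>{1..n}. j < k \<and> y j < 0} = {}" for k
    using y by fastforce
  then show ?thesis
    using y unfolding budget_inv_def y_def algA_init_def by simp
qed

text \<open>In an up step the feeder becomes a new negative vertex; every later
  nonnegative entry is lowered by one to compensate.\<close>

lemma budget_inv_up_step:
  assumes inv: "budget_inv n xs (y, U, D)" and feeder: "up_feeder n y j0"
  shows "budget_inv n xs (up_update n y j0, U', D)"
  unfolding budget_inv_def prod.case
proof (intro ballI impI)
  let ?y' = "up_update n y j0"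
  fix k assume k: "k \<in> {1..n}" and nonneg: "0 \<le> ?y' k"
  have j0: "j0 \<in> {1..n}" "y j0 = 0" "\<forall>k \<in> {1..n}. y k = 0 \<longrightarrow> k \<le> j0"
    using feeder unfolding up_feeder_def by auto
  have "k \<noteq> j0" and old_nonneg: "0 \<le> y k"
    using k nonneg unfolding up_update_def by (auto split: if_splits)
  then have old: "y k + int (card {j\<in>{1..n}. j < k \<and> y j < 0})
      + int (card {j\<in>{k<..n}. (j, k) \<in> D}) \<le> int (xs ! (k - 1)) - 1"
    using inv k unfolding budget_inv_def by auto
  have neg: "j \<in> {1..n} \<Longrightarrow> ?y' j < 0 \<longleftrightarrow> j = j0 \<or> y j < 0" for j
    using up_update_neg_iff[OF feeder] by blast
  show "?y' k + int (card {j\<in>{1..n}. j < k \<and> ?y' j < 0})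
      + int (card {j\<in>{k<..n}. (j, k) \<in> D}) \<le> int (xs ! (k - 1)) - 1"
  proof (cases "j0 < k")
    case True
    have "y k \<noteq> 0" using j0(3) k True by fastforce
    then have "?y' k = y k - 1"
      using True old_nonneg k unfolding up_update_def by auto
    moreover have "{j\<in>{1..n}. j < k \<and> ?y' j < 0} = insert j0 {j\<in>{1..n}. j < k \<and> y j < 0}"
      using neg True j0(1) by auto
    moreover have "j0 \<notin> {j\<in>{1..n}. j < k \<and> y j < 0}" using j0(2) by auto
    ultimately show ?thesis using old by simp
  next
    case False
    then have "?y' k = y k"
      using \<open>k \<noteq> j0\<close> old_nonneg k unfolding up_update_def by auto
    moreover have "{j\<in>{1..n}. j < k \<and> ?y' j < 0} = {j\<in>{1..n}. j < k \<and> y j < 0}"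
      using neg False by auto
    ultimately show ?thesis using old by simp
  qed
qed

text \<open>In a down step each new down edge into k is paid for by lowering y k.\<close>

lemma budget_inv_down_step:
  assumes inv: "budget_inv n xs (y, U, D)"
  shows "budget_inv n xs (down_update n y j0, U', D \<union> down_edges n y j0)"
  unfolding budget_inv_def prod.case
proof (intro ballI impI)
  let ?y' = "down_update n y j0" and ?D' = "D \<union> down_edges n y j0"
  fix k assume k: "k \<in> {1..n}" and nonneg: "0 \<le> ?y' k"
  let ?lowered = "k < j0 \<and> 0 < y k"
  have "0 \<le> y k" using nonneg unfolding down_update_def by (auto split: if_splits)
  then have old: "y k + int (card {j\<in>{1..n}. j < k \<and> y j < 0})
      + int (card {j\<in>{k<..n}. (j, k) \<in> D}) \<le> int (xs ! (k - 1)) - 1"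
    using inv k unfolding budget_inv_def by auto
  have same_neg: "{j\<in>{1..n}. j < k \<and> ?y' j < 0} = {j\<in>{1..n}. j < k \<and> y j < 0}"
    unfolding down_update_def by auto
  have y': "?y' k = y k - (if ?lowered then 1 else 0)"
    using k unfolding down_update_def by auto
  have "card {j\<in>{k<..n}. (j, k) \<in> ?D'} \<le> card {j\<in>{k<..n}. (j, k) \<in> D} + (if ?lowered then 1 else 0)"
  proof (cases ?lowered)
    case True
    have "{j\<in>{k<..n}. (j, k) \<in> ?D'} \<subseteq> insert j0 {j\<in>{k<..n}. (j, k) \<in> D}"
      unfolding down_edges_def by auto
    then have "card {j\<in>{k<..n}. (j, k) \<in> ?D'} \<le> card (insert j0 {j\<in>{k<..n}. (j, k) \<in> D})"
      by (intro card_mono) auto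
    also have "\<dots> \<le> card {j\<in>{k<..n}. (j, k) \<in> D} + 1"
      by (simp add: card_insert_if)
    finally show ?thesis using True by simp
  next
    case False
    then have "{j\<in>{k<..n}. (j, k) \<in> ?D'} = {j\<in>{k<..n}. (j, k) \<in> D}"
      unfolding down_edges_def by auto
    then show ?thesis by simp
  qed
  then show "?y' k + int (card {j\<in>{1..n}. j < k \<and> ?y' j < 0})
      + int (card {j\<in>{k<..n}. (j, k) \<in> ?D'}) \<le> int (xs ! (k - 1)) - 1"
    using old same_neg y' by (auto split: if_splits)
qed

lemma budget_inv_step:
  assumes "budget_inv n xs st" and "algA_step n st st'"
  shows "budget_inv n xs st'"
proof -
  obtain y U D where st: "st = (y, U, D)" by (cases st)
  show ?thesis
    using assms budget_inv_up_step budget_inv_down_step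
    unfolding st algA_step_def up_step_iff down_step_iff by blast
qed

subsection \<open>Progress\<close>

lemma parking_function_count:
  assumes pf: "parking_function xs" and c: "c \<le> length xs"
  shows "c \<le> card {i\<in>{1..length xs}. xs ! (i - 1) \<le> c}"
proof -
  have "{i\<in>{1..length xs}. xs ! (i - 1) \<le> c} = Suc ` {i. i < length xs \<and> xs ! i \<le> c}"
  proof (rule set_eqI, rule iffI)
    fix i assume "i \<in> {i\<in>{1..length xs}. xs ! (i - 1) \<le> c}"
    then show "i \<in> Suc ` {i. i < length xs \<and> xs ! i \<le> c}"
      by (intro image_eqI[of _ _ "i - 1"]) auto
  qed auto
  then have "card {i\<in>{1..length xs}. xs ! (i - 1) \<le> c} = length (filter (\<lambda>v. v \<le> c) xs)"
    by (simp add: card_image length_filter_conv_card)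
  also have "\<dots> = length (filter (\<lambda>v. v \<le> c) (sort xs))"
    by (simp only: filter_sort length_sort)
  also have "\<dots> = card {i. i < length xs \<and> sort xs ! i \<le> c}"
    by (simp add: length_filter_conv_card)
  finally have eq: "card {i\<in>{1..length xs}. xs ! (i - 1) \<le> c}
      = card {i. i < length xs \<and> sort xs ! i \<le> c}" .
  have "{..<c} \<subseteq> {i. i < length xs \<and> sort xs ! i \<le> c}"
    using pf c unfolding parking_function_def by auto (metis Suc_leI le_trans order.strict_trans2)
  then have "card {..<c} \<le> card {i. i < length xs \<and> sort xs ! i \<le> c}"
    by (intro card_mono) auto
  then show ?thesis using eq by simp
qed

text \<open>Let P be the set of positive vertices, with m elements, in a state
  where no entry is zero.  A positive vertex k that has received down edges
  from all later vertices had its budget consumed by n - k down edges and by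
  at least (k - 1) - (m - 1) earlier negative vertices, hence x_k \<ge> n + 2 - m.\<close>

lemma saturated_vertex_entry_large:
  assumes inv: "budget_inv n xs (y, U, D)" and nonzero: "\<forall>k\<in>{1..n}. y k \<noteq> 0"
    and P: "P = {k\<in>{1..n}. 0 < y k}" and kP: "k \<in> P"
    and saturated: "{k<..n} \<subseteq> {j. (j, k) \<in> D}"
  shows "int (n + 2) - int (card P) \<le> int (xs ! (k - 1))"
proof -
  have k: "k \<in> {1..n}" "0 < y k" using kP P by auto
  have old: "y k + int (card {j\<in>{1..n}. j < k \<and> y j < 0})
      + int (card {j\<in>{k<..n}. (j, k) \<in> D}) \<le> int (xs ! (k - 1)) - 1"
    using inv k unfolding budget_inv_def by auto
  have "{j\<in>{k<..n}. (j, k) \<in> D} = {k<..n}" using saturated by auto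
  then have down: "card {j\<in>{k<..n}. (j, k) \<in> D} = n - k" by simp
  have earlier_sub: "{p\<in>P. p < k} \<subseteq> {1..<k}" using P by auto
  have "{j\<in>{1..n}. j < k \<and> y j < 0} = {1..<k} - {p\<in>P. p < k}"
    using nonzero k P by (auto simp: not_less order_le_less)
  then have neg: "card {j\<in>{1..n}. j < k \<and> y j < 0} = (k - 1) - card {p\<in>P. p < k}"
    using earlier_sub by (simp add: card_Diff_subset finite_subset)
  have "card {p\<in>P. p < k} \<le> k - 1"
    using card_mono[OF _ earlier_sub] by simp
  moreover have "card {p\<in>P. p < k} \<le> card P - 1"
  proof -
    have "finite P" using P by simp
    then have "card {p\<in>P. p < k} \<le> card (P - {k})" by (intro card_mono) auto
    then show ?thesis using kP \<open>finite P\<close> by simp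
  qed
  moreover have "1 \<le> card P" using kP P by (auto simp: Suc_le_eq card_gt_0_iff)
  ultimately show ?thesis using old down neg k by linarith
qed

text \<open>Hence, whenever no entry is zero but some entry is positive, a down
  feeder candidate exists: otherwise the m positive vertices all have entries
  above n + 1 - m, while the parking condition provides n + 1 - m other
  vertices with entries at most n + 1 - m, i.e. more than n vertices.\<close>

lemma down_cand_exists:
  assumes pf: "parking_function xs" and n: "n = length xs"
    and inv: "budget_inv n xs (y, U, D)"
    and nonzero: "\<forall>k\<in>{1..n}. y k \<noteq> 0" and pos: "\<exists>k\<in>{1..n}. 0 < y k"
  shows "\<exists>j. down_cand n (y, U, D) j"
proof (rule ccontr)
  assume "\<not> ?thesis"
  then have saturated: "k \<in> {1..n} \<Longrightarrow> 0 < y k \<Longrightarrow> {k<..n} \<subseteq> {j. (j, k) \<in> D}" for k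
    unfolding down_cand_def by fastforce
  define P where "P = {k\<in>{1..n}. 0 < y k}"
  define A where "A = {i\<in>{1..n}. xs ! (i - 1) \<le> n + 1 - card P}"
  have P_sub: "P \<subseteq> {1..n}" and A_sub: "A \<subseteq> {1..n}" unfolding P_def A_def by auto
  have "1 \<le> card P" using pos unfolding P_def by (auto simp: Suc_le_eq card_gt_0_iff)
  moreover have "card P \<le> n" using card_mono[OF _ P_sub] by simp
  ultimately have "n + 1 - card P \<le> card A"
    using parking_function_count[OF pf, of "n + 1 - card P"] n unfolding A_def by simp
  moreover have "A \<inter> P = {}"
  proof -
    have False if "k \<in> A" "k \<in> P" for k
    proof -
      have "int (n + 2) - int (card P) \<le> int (xs ! (k - 1))"
        using saturated_vertex_entry_large[OF inv nonzero P_def \<open>k \<in> P\<close>] saturated that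
        unfolding P_def by blast
      moreover have "xs ! (k - 1) \<le> n + 1 - card P" using \<open>k \<in> A\<close> unfolding A_def by simp
      ultimately show False using \<open>card P \<le> n\<close> by linarith
    qed
    then show ?thesis by blast
  qed
  then have "card (A \<union> P) = card A + card P"
    using P_sub A_sub by (intro card_Un_disjoint) (auto intro: finite_subset)
  moreover have "card (A \<union> P) \<le> n" using card_mono[of "{1..n}" "A \<union> P"] P_sub A_sub by simp
  ultimately show False using \<open>1 \<le> card P\<close> \<open>card P \<le> n\<close> by linarith
qed

lemma step_exists:
  assumes pf: "parking_function xs" and n: "n = length xs"
    and inv: "budget_inv n xs (y, U, D)" and not_stopped: "\<not> algA_stopped n (y, U, D)"
  shows "\<exists>st'. algA_step n (y, U, D) st'"
proof (cases "\<exists>k\<in>{1..n}. y k = 0")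
  case True
  define Z where "Z = {k\<in>{1..n}. y k = 0}"
  have "finite Z" "Z \<noteq> {}" using True unfolding Z_def by auto
  then have "Max Z \<in> Z" and "\<forall>k \<in> Z. k \<le> Max Z" by simp_all
  then have "up_feeder n y (Max Z)" unfolding up_feeder_def Z_def by blast
  then show ?thesis unfolding algA_step_def up_step_iff by blast
next
  case False
  then have nonzero: "\<forall>k\<in>{1..n}. y k \<noteq> 0" by auto
  moreover have pos: "\<exists>k\<in>{1..n}. 0 < y k"
    using not_stopped nonzero unfolding algA_stopped_def by force
  define C where "C = {j. down_cand n (y, U, D) j}"
  have "finite C" unfolding C_def down_cand_def by (auto intro: finite_subset[of _ "{1..n}"])
  moreover have "C \<noteq> {}" using down_cand_exists[OF pf n inv nonzero pos] unfolding C_def by blast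
  ultimately obtain j where "j \<in> C" and "y j = Min (y ` C)"
    using Min_in[of "y ` C"] by fastforce
  then have "down_cand n (y, U, D) j \<and> (\<forall>j'. down_cand n (y, U, D) j' \<longrightarrow> y j \<le> y j')"
    using \<open>finite C\<close> unfolding C_def by auto
  then show ?thesis unfolding algA_step_def down_step_iff using nonzero pos by blast
qed

lemma run_reaches_stop:
  assumes pf: "parking_function xs" and n: "n = length xs"
  shows "budget_inv n xs st \<Longrightarrow> \<exists>st'. (algA_step n)\<^sup>*\<^sup>* st st' \<and> algA_stopped n st'"
proof (induction "potential n (fst st)" arbitrary: st rule: less_induct)
  case less
  obtain y U D where st: "st = (y, U, D)" by (cases st)
  show ?case
  proof (cases "algA_stopped n st")
    case False
    then obtain y' U' D' where step: "algA_step n st (y', U', D')"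
      using step_exists[OF pf n] less.prems st by fastforce
    have "potential n y' < potential n (fst st)" using potential_step step st by simp
    moreover have "budget_inv n xs (y', U', D')" using budget_inv_step less.prems step by blast
    ultimately obtain st' where "(algA_step n)\<^sup>*\<^sup>* (y', U', D') st'" "algA_stopped n st'"
      using less.hyps[of "(y', U', D')"] by auto
    then show ?thesis using step by (meson converse_rtranclp_into_rtranclp)
  qed blast
qed

theorem lemma2p5:
  fixes xs :: "nat list" and n :: nat
  assumes "parking_function xs" and "n = length xs"
  shows "(\<exists>s U D W. algA_output xs s U D W) \<and>
         (\<forall>s U D W i j. algA_output xs s U D W \<longrightarrow> 1 \<le> i \<longrightarrow> i < j \<longrightarrow> j \<le> n \<longrightarrow>
            (\<bar>s i\<bar> > \<bar>s j\<bar> \<longleftrightarrow> (i, j) \<in> U))"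
proof
  have positive: "\<forall>v \<in> set xs. 0 < v"
    using assms(1) unfolding parking_function_def by blast
  obtain s U D where "(algA_step (length xs))\<^sup>*\<^sup>* (algA_init xs) (s, U, D)"
      and "algA_stopped (length xs) (s, U, D)"
    using run_reaches_stop[OF assms(1) refl budget_inv_init[OF positive refl]]
    by (metis prod_cases3)
  then show "\<exists>s U D W. algA_output xs s U D W" unfolding algA_output_def by blast
  show "\<forall>s U D W i j. algA_output xs s U D W \<longrightarrow> 1 \<le> i \<longrightarrow> i < j \<longrightarrow> j \<le> n \<longrightarrow>
      (\<bar>s i\<bar> > \<bar>s j\<bar> \<longleftrightarrow> (i, j) \<in> U)"
    using up_edge_order_reachable[OF positive] up_edge_order_stopped assms(2)
    unfolding algA_output_def by blast
qed

end
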